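(* Let $X$ be a prelength space and $Y$ a metric space. Then $\mathrm{map}:(X\to Y)\to(\mathfrak{C}(X)\to\mathfrak{C}(Y))$ is uniformly continuous with modulus $\lambda\varepsilon.\varepsilon$; that is, for all $\varepsilon$ and uniformly continuous $f,g:X\to Y$, if $B_\varepsilon(f(a),g(a))$ for all $a\in X$, then $B'_\varepsilon(\mathrm{map}(f)(x),\mathrm{map}(g)(x))$ for all $x\in\mathfrak{C}(X)$.
   Context: $\mathbb{Q}^+$ denotes the strictly positive rationals; all $\varepsilon,\delta$ (with indices) range over $\mathbb{Q}^+$. A metric space is a triple $(X,\asymp,B)$ where $\asymp$ is an equivalence relation on $X$ and $B$ assigns to each $\varepsilon\in\mathbb{Q}^+$ a binary relation $B_\varepsilon$ on $X$ respecting $\asymp$, such that: (1) each $B_\varepsilon$ is reflexive; (2) each $B_\varepsilon$ is symmetric; (3) if $B_{\varepsilon_1}(a,b)$ and $B_{\varepsilon_2}(b,c)$ then $B_{\varepsilon_1+\varepsilon_2}(a,c)$; (4) if $B_{\varepsilon+\delta}(a,b)$ for all $\delta$, then $B_\varepsilon(a,b)$; (5) if $B_\varepsilon(a,b)$ for all $\varepsilon$, then $a\asymp b$. A prelength space is a metric space such that for all $a,b,\varepsilon,\delta_1,\delta_2$ with $\varepsilon<\delta_1+\delta_2$ and $B_\varepsilon(a,b)$ there exists $c$ with $B_{\delta_1}(a,c)$ and $B_{\delta_2}(c,b)$. A regular function over $X$ is a function $x:\mathbb{Q}^+\to X$ such that $B_{\varepsilon_1+\varepsilon_2}(x(\varepsilon_1),x(\varepsilon_2))$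 for all $\varepsilon_1,\varepsilon_2$. $\mathfrak{C}(X)$ is the metric space of regular functions over $X$, with $x\asymp y$ iff $B_{2\varepsilon}(x(\varepsilon),y(\varepsilon))$ for all $\varepsilon$ and $B'_\varepsilon(x,y)$ iff $B_{\varepsilon+\delta_1+\delta_2}(x(\delta_1),y(\delta_2))$ for all $\delta_1,\delta_2$. A uniformly continuous function $f:X\to Y$ is a pair of a function and a modulus $\mu_f$ with $B^X_{\mu_f(\varepsilon)}(x_1,x_2)\Rightarrow B^Y_\varepsilon(f(x_1),f(x_2))$. For metric spaces $U,V$, $U\to V$ denotes the metric space of uniformly continuous functions with $B_\varepsilon(f,g)$ iff $B_\varepsilon(f(a),g(a))$ for all $a\in U$. $\mathrm{map}(f)(x)=\lambda\varepsilon.\,f(x(\mu_f(\varepsilon)))$. *)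

theory Defs
  imports Complex_Main
begin

definition metric_space :: "'a set \<Rightarrow> ('a \<Rightarrow> 'a \<Rightarrow> bool) \<Rightarrow> (rat \<Rightarrow> 'a \<Rightarrow> 'a \<Rightarrow> bool) \<Rightarrow> bool" where
  "metric_space X eq B \<longleftrightarrow>
     (\<forall>a\<in>X. eq a a) \<and>
     (\<forall>a\<in>X. \<forall>b\<in>X. eq a b \<longrightarrow> eq b a) \<and>
     (\<forall>a\<in>X. \<forall>b\<in>X. \<forall>c\<in>X. eq a b \<longrightarrow> eq b c \<longrightarrow> eq a c) \<and>
     (\<forall>e>0. \<forall>a\<in>X. \<forall>b\<in>X. \<forall>a'\<in>X. \<forall>b'\<in>X.
        eq a a' \<longrightarrow> eq b b' \<longrightarrow> B e a b \<longrightarrow> B e a' b') \<and>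
     (\<forall>e>0. \<forall>a\<in>X. B e a a) \<and>
     (\<forall>e>0. \<forall>a\<in>X. \<forall>b\<in>X. B e a b \<longrightarrow> B e b a) \<and>
     (\<forall>e1>0. \<forall>e2>0. \<forall>a\<in>X. \<forall>b\<in>X. \<forall>c\<in>X.
        B e1 a b \<longrightarrow> B e2 b c \<longrightarrow> B (e1 + e2) a c) \<and>
     (\<forall>e>0. \<forall>a\<in>X. \<forall>b\<in>X. (\<forall>d>0. B (e + d) a b) \<longrightarrow> B e a b) \<and>
     (\<forall>a\<in>X. \<forall>b\<in>X. (\<forall>e>0. B e a b) \<longrightarrow> eq a b)"

definition prelength_space :: "'a set \<Rightarrow> ('a \<Rightarrow> 'a \<Rightarrow> bool) \<Rightarrow> (rat \<Rightarrow> 'a \<Rightarrow> 'a \<Rightarrow> bool) \<Rightarrow> bool" where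
  "prelength_space X eq B \<longleftrightarrow> metric_space X eq B \<and>
     (\<forall>a\<in>X. \<forall>b\<in>X. \<forall>e>0. \<forall>d1>0. \<forall>d2>0.
        e < d1 + d2 \<longrightarrow> B e a b \<longrightarrow> (\<exists>c\<in>X. B d1 a c \<and> B d2 c b))"

text \<open>Regular functions over X (only values at positive rationals matter).\<close>
definition regular_fun :: "'a set \<Rightarrow> (rat \<Rightarrow> 'a \<Rightarrow> 'a \<Rightarrow> bool) \<Rightarrow> (rat \<Rightarrow> 'a) \<Rightarrow> bool" where
  "regular_fun X B x \<longleftrightarrow> (\<forall>e>0. x e \<in> X) \<and>
     (\<forall>e1>0. \<forall>e2>0. B (e1 + e2) (x e1) (x e2))"

definition ball_C :: "(rat \<Rightarrow> 'a \<Rightarrow> 'a \<Rightarrow> bool) \<Rightarrow> rat \<Rightarrow> (rat \<Rightarrow> 'a) \<Rightarrow> (rat \<Rightarrow> 'a) \<Rightarrow> bool" where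
  "ball_C B e x y \<longleftrightarrow> (\<forall>d1>0. \<forall>d2>0. B (e + d1 + d2) (x d1) (y d2))"

definition unif_cont :: "'a set \<Rightarrow> (rat \<Rightarrow> 'a \<Rightarrow> 'a \<Rightarrow> bool) \<Rightarrow> 'b set \<Rightarrow> (rat \<Rightarrow> 'b \<Rightarrow> 'b \<Rightarrow> bool)
    \<Rightarrow> ('a \<Rightarrow> 'b) \<Rightarrow> (rat \<Rightarrow> rat) \<Rightarrow> bool" where
  "unif_cont X BX Y BY f mu \<longleftrightarrow> (\<forall>a\<in>X. f a \<in> Y) \<and> (\<forall>e>0. mu e > 0) \<and>
     (\<forall>e>0. \<forall>a\<in>X. \<forall>b\<in>X. BX (mu e) a b \<longrightarrow> BY e (f a) (f b))"

definition cmap :: "('a \<Rightarrow> 'b) \<Rightarrow> (rat \<Rightarrow> rat) \<Rightarrow> (rat \<Rightarrow> 'a) \<Rightarrow> (rat \<Rightarrow> 'b)" where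
  "cmap f mu x = (\<lambda>e. f (x (mu e)))"

end

theory Submission
  imports Defs
begin

text \<open>Put a = x(mu_f d1) and b = x(mu_g d2); by regularity a and b are (mu_f d1 + mu_g d2)-close.
  Since X is a prelength space, for every delta there are c, c' with a, c within mu_f d1, c, c'
  within mu_g delta and c', b within mu_g d2. The chain f a, f c, g c, g c', g b then shows that
  f a and g b are (e + d1 + d2 + delta)-close, and closedness of the balls of Y removes delta.\<close>

lemma metric_space_triangle:
  assumes "metric_space X eq B" "e1 > 0" "e2 > 0" "a \<in> X" "b \<in> X" "c \<in> X"
    and "B e1 a b" "B e2 b c"
  shows "B (e1 + e2) a c"
  using assms unfolding metric_space_def by blast

lemma metric_space_ball_closed:
  assumes "metric_space X eq B" "e > 0" "a \<in> X" "b \<in> X" "\<And>d. d > 0 \<Longrightarrow> B (e + d) a b"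
  shows "B e a b"
  using assms unfolding metric_space_def by blast

lemma prelength_space_split:
  assumes "prelength_space X eq B" "a \<in> X" "b \<in> X" "e > 0" "d1 > 0" "d2 > 0"
    and "e < d1 + d2" "B e a b"
  obtains c where "c \<in> X" "B d1 a c" "B d2 c b"
  using assms unfolding prelength_space_def by blast

lemma prelength_space_split3:
  assumes "prelength_space X eq B" "a \<in> X" "b \<in> X" "d1 > 0" "d2 > 0" "m > 0"
    and "B (d1 + d2) a b"
  obtains c c' where "c \<in> X" "c' \<in> X" "B d1 a c" "B m c c'" "B d2 c' b"
proof -
  obtain c where c: "c \<in> X" "B d1 a c" and cb: "B (m/2 + d2) c b"
    using prelength_space_split[OF assms(1-3), of "d1 + d2" d1 "m/2 + d2"] assms(4-7) by auto
  obtain c' where "c' \<in> X" "B m c c'" "B d2 c' b"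
    using prelength_space_split[OF assms(1) c(1) assms(3), of "m/2 + d2" m d2] cb assms(5,6) by auto
  with c that show ?thesis by blast
qed

lemma unif_cont_mem: "unif_cont X BX Y BY f mu \<Longrightarrow> a \<in> X \<Longrightarrow> f a \<in> Y"
  unfolding unif_cont_def by blast

lemma unif_cont_modulus_pos: "unif_cont X BX Y BY f mu \<Longrightarrow> e > 0 \<Longrightarrow> mu e > 0"
  unfolding unif_cont_def by blast

lemma unif_cont_ball:
  "unif_cont X BX Y BY f mu \<Longrightarrow> e > 0 \<Longrightarrow> a \<in> X \<Longrightarrow> b \<in> X \<Longrightarrow> BX (mu e) a b
    \<Longrightarrow> BY e (f a) (f b)"
  unfolding unif_cont_def by blast

lemma unif_close_maps_ball:
  assumes X: "prelength_space X eqX BX" and Y: "metric_space Y eqY BY"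
    and f: "unif_cont X BX Y BY f muf" and g: "unif_cont X BX Y BY g mug"
    and "e > 0" and fg: "\<forall>a\<in>X. BY e (f a) (g a)"
    and "d1 > 0" "d2 > 0" "a \<in> X" "b \<in> X" and ab: "BX (muf d1 + mug d2) a b"
  shows "BY (e + d1 + d2) (f a) (g b)"
proof (rule metric_space_ball_closed[OF Y])
  fix d :: rat
  assume "d > 0"
  obtain c c' where "c \<in> X" "c' \<in> X"
    and "BX (muf d1) a c" "BX (mug d) c c'" "BX (mug d2) c' b"
    using prelength_space_split3[OF X \<open>a \<in> X\<close> \<open>b \<in> X\<close> _ _ _ ab]
      unif_cont_modulus_pos[OF f \<open>d1 > 0\<close>] unif_cont_modulus_pos[OF g \<open>d2 > 0\<close>]
      unif_cont_modulus_pos[OF g \<open>d > 0\<close>] by metis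
  with assms \<open>d > 0\<close> have "BY d1 (f a) (f c)" "BY e (f c) (g c)"
    "BY d (g c) (g c')" "BY d2 (g c') (g b)"
    by (auto intro: unif_cont_ball)
  with assms \<open>d > 0\<close> \<open>c \<in> X\<close> \<open>c' \<in> X\<close> have "BY (((d1 + e) + d) + d2) (f a) (g b)"
    by (intro metric_space_triangle[OF Y]) (auto intro: metric_space_triangle[OF Y] unif_cont_mem)
  then show "BY (e + d1 + d2 + d) (f a) (g b)"
    by (simp add: algebra_simps)
qed (use assms in \<open>auto intro: unif_cont_mem\<close>)

theorem lemma24:
  fixes X :: "'a set" and eqX :: "'a \<Rightarrow> 'a \<Rightarrow> bool" and BX :: "rat \<Rightarrow> 'a \<Rightarrow> 'a \<Rightarrow> bool"
    and Y :: "'b set" and eqY :: "'b \<Rightarrow> 'b \<Rightarrow> bool" and BY :: "rat \<Rightarrow> 'b \<Rightarrow> 'b \<Rightarrow> bool"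
    and f g :: "'a \<Rightarrow> 'b" and muf mug :: "rat \<Rightarrow> rat" and e :: rat and x :: "rat \<Rightarrow> 'a"
  assumes "prelength_space X eqX BX"
    and "metric_space Y eqY BY"
    and "unif_cont X BX Y BY f muf"
    and "unif_cont X BX Y BY g mug"
    and "e > 0"
    and "\<forall>a\<in>X. BY e (f a) (g a)"
    and "regular_fun X BX x"
  shows "ball_C BY e (cmap f muf x) (cmap g mug x)"
  unfolding ball_C_def cmap_def
proof (intro allI impI)
  fix d1 d2 :: rat
  assume "d1 > 0" "d2 > 0"
  then have "muf d1 > 0" "mug d2 > 0"
    using assms(3,4) by (simp_all add: unif_cont_modulus_pos)
  with assms(7) have "x (muf d1) \<in> X" "x (mug d2) \<in> X"
    and "BX (muf d1 + mug d2) (x (muf d1)) (x (mug d2))"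
    unfolding regular_fun_def by blast+
  with assms \<open>d1 > 0\<close> \<open>d2 > 0\<close> show "BY (e + d1 + d2) (f (x (muf d1))) (g (x (mug d2)))"
    by (intro unif_close_maps_ball[of X eqX BX Y eqY BY f muf g mug])
qed

end
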